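(* Let $X$, $Y$ be disjoint sets of cardinality at least two, $M\le\mathrm{Sym}(X)$ and $N\le\mathrm{Sym}(Y)$ nontrivial permutation groups, $T$ the $(|X|,|Y|)$-biregular tree and $c$ a legal colouring. If $m$ (resp. $n$) denotes the number of orbits of $M$ (resp. $N$), then the quotient $U_c(M,N)\backslash T$ is the complete bipartite graph $K_{m,n}$.
   Context: $T$ has natural bipartition $VT=V_X\sqcup V_Y$ (vertices in $V_X$ have valency $|X|$, in $V_Y$ valency $|Y|$). $A(v)$, $\overline{A}(v)$ are the sets of arcs with origin, resp. terminus, $v$. A legal colouring is a map $c:AT\to X\cup Y$ restricting to a bijection $A(v)\to X$ for $v\in V_X$, to a bijection $A(v)\to Y$ for $v\in V_Y$, and constant on each $\overline{A}(v)$. $U_c(M,N)$ is the group of $g\in\mathrm{Aut}(T)$ with $gV_X=V_X$ and $c|_{A(gv)}\circ g|_{A(v)}\circ(c|_{A(v)})^{-1}$ in $M$ for $v\in V_X$ and in $N$ for $v\in V_Y$. For a group $G$ acting on a tree without inversion, the quotient $G\backslash T$ is the (multi)graph whose vertices are the $G$-orbits on $VT$ and whose edges are the $G$-orbits on edges of $T$, an edge-orbit being incident to the vertex-orbits containing its endpoints. *)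

theory Defs
  imports "HOL-Algebra.Bij" "HOL-Library.Equipollence"
begin

definition simple_graph :: "'v set \<Rightarrow> ('v \<Rightarrow> 'v \<Rightarrow> bool) \<Rightarrow> bool" where
  "simple_graph VT E \<longleftrightarrow>
     (\<forall>u w. E u w \<longrightarrow> u \<in> VT \<and> w \<in> VT) \<and>
     (\<forall>u w. E u w \<longrightarrow> E w u) \<and> (\<forall>u. \<not> E u u)"

definition connected_graph :: "'v set \<Rightarrow> ('v \<Rightarrow> 'v \<Rightarrow> bool) \<Rightarrow> bool" where
  "connected_graph VT E \<longleftrightarrow> (\<forall>u\<in>VT. \<forall>w\<in>VT. E\<^sup>*\<^sup>* u w)"

definition is_cycle :: "('v \<Rightarrow> 'v \<Rightarrow> bool) \<Rightarrow> 'v list \<Rightarrow> bool" where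
  "is_cycle E xs \<longleftrightarrow> length xs \<ge> 3 \<and> distinct xs \<and>
     (\<forall>i. Suc i < length xs \<longrightarrow> E (xs ! i) (xs ! Suc i)) \<and> E (last xs) (hd xs)"

definition is_tree :: "'v set \<Rightarrow> ('v \<Rightarrow> 'v \<Rightarrow> bool) \<Rightarrow> bool" where
  "is_tree VT E \<longleftrightarrow> simple_graph VT E \<and> connected_graph VT E \<and>
     VT \<noteq> {} \<and> (\<nexists>xs. is_cycle E xs)"

definition neighbours :: "('v \<Rightarrow> 'v \<Rightarrow> bool) \<Rightarrow> 'v \<Rightarrow> 'v set" where
  "neighbours E v = {w. E v w}"

definition biregular_tree ::
  "'v set \<Rightarrow> ('v \<Rightarrow> 'v \<Rightarrow> bool) \<Rightarrow> 'v set \<Rightarrow> 'v set \<Rightarrow> 'c set \<Rightarrow> 'c set \<Rightarrow> bool" where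
  "biregular_tree VT E VX VY X Y \<longleftrightarrow> is_tree VT E \<and>
     VX \<union> VY = VT \<and> VX \<inter> VY = {} \<and>
     (\<forall>u w. E u w \<longrightarrow> (u \<in> VX \<longleftrightarrow> w \<in> VY)) \<and>
     (\<forall>v\<in>VX. neighbours E v \<approx> X) \<and> (\<forall>v\<in>VY. neighbours E v \<approx> Y)"

definition arcs_from :: "('v \<Rightarrow> 'v \<Rightarrow> bool) \<Rightarrow> 'v \<Rightarrow> ('v \<times> 'v) set" where
  "arcs_from E v = {(v, w) | w. E v w}"

definition arcs_to :: "('v \<Rightarrow> 'v \<Rightarrow> bool) \<Rightarrow> 'v \<Rightarrow> ('v \<times> 'v) set" where
  "arcs_to E v = {(u, v) | u. E u v}"

definition legal_colouring ::
  "'v set \<Rightarrow> ('v \<Rightarrow> 'v \<Rightarrow> bool) \<Rightarrow> 'v set \<Rightarrow> 'v set \<Rightarrow> 'c set \<Rightarrow> 'c set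
     \<Rightarrow> ('v \<times> 'v \<Rightarrow> 'c) \<Rightarrow> bool" where
  "legal_colouring VT E VX VY X Y c \<longleftrightarrow>
     (\<forall>v\<in>VX. bij_betw c (arcs_from E v) X) \<and>
     (\<forall>v\<in>VY. bij_betw c (arcs_from E v) Y) \<and>
     (\<forall>v\<in>VT. \<forall>a\<in>arcs_to E v. \<forall>b\<in>arcs_to E v. c a = c b)"

definition tree_aut :: "'v set \<Rightarrow> ('v \<Rightarrow> 'v \<Rightarrow> bool) \<Rightarrow> ('v \<Rightarrow> 'v) set" where
  "tree_aut VT E = {g \<in> Bij VT. \<forall>u\<in>VT. \<forall>w\<in>VT. E u w \<longleftrightarrow> E (g u) (g w)}"

text \<open>The local action  c|A(gv) o g|A(v) o (c|A(v))^{-1},  a permutation of S.\<close>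
definition local_action ::
  "('v \<Rightarrow> 'v \<Rightarrow> bool) \<Rightarrow> ('v \<times> 'v \<Rightarrow> 'c) \<Rightarrow> ('v \<Rightarrow> 'v) \<Rightarrow> 'v \<Rightarrow> 'c set \<Rightarrow> ('c \<Rightarrow> 'c)" where
  "local_action E c g v S =
     (\<lambda>x\<in>S. let a = the_inv_into (arcs_from E v) c x in c (g (fst a), g (snd a)))"

definition U_c ::
  "'v set \<Rightarrow> ('v \<Rightarrow> 'v \<Rightarrow> bool) \<Rightarrow> 'v set \<Rightarrow> 'v set \<Rightarrow> 'c set \<Rightarrow> 'c set
     \<Rightarrow> ('v \<times> 'v \<Rightarrow> 'c) \<Rightarrow> ('c \<Rightarrow> 'c) set \<Rightarrow> ('c \<Rightarrow> 'c) set \<Rightarrow> ('v \<Rightarrow> 'v) set" where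
  "U_c VT E VX VY X Y c M N =
     {g \<in> tree_aut VT E. g ` VX = VX \<and>
        (\<forall>v\<in>VX. local_action E c g v X \<in> M) \<and>
        (\<forall>v\<in>VY. local_action E c g v Y \<in> N)}"

definition perm_orbits :: "('a \<Rightarrow> 'a) set \<Rightarrow> 'a set \<Rightarrow> 'a set set" where
  "perm_orbits G S = (\<lambda>x. {g x | g. g \<in> G}) ` S"

definition tree_edges :: "'v set \<Rightarrow> ('v \<Rightarrow> 'v \<Rightarrow> bool) \<Rightarrow> 'v set set" where
  "tree_edges VT E = {{u, w} | u w. u \<in> VT \<and> w \<in> VT \<and> E u w}"

definition quot_vertices :: "('v \<Rightarrow> 'v) set \<Rightarrow> 'v set \<Rightarrow> 'v set set" where
  "quot_vertices G VT = perm_orbits G VT"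

definition quot_edges ::
  "('v \<Rightarrow> 'v) set \<Rightarrow> 'v set \<Rightarrow> ('v \<Rightarrow> 'v \<Rightarrow> bool) \<Rightarrow> 'v set set set" where
  "quot_edges G VT E = (\<lambda>e. {g ` e | g. g \<in> G}) ` tree_edges VT E"

definition quot_incident :: "'v set set \<Rightarrow> 'v set \<Rightarrow> bool" where
  "quot_incident eo Ov \<longleftrightarrow> (\<exists>e\<in>eo. e \<inter> Ov \<noteq> {})"

definition complete_bipartite_on ::
  "'a set \<Rightarrow> 'b set \<Rightarrow> ('b \<Rightarrow> 'a \<Rightarrow> bool) \<Rightarrow> 'a set \<Rightarrow> 'a set \<Rightarrow> bool" where
  "complete_bipartite_on V Ed inc P Q \<longleftrightarrow>
     P \<union> Q = V \<and> P \<inter> Q = {} \<and>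
     (\<forall>e\<in>Ed. \<exists>p\<in>P. \<exists>q\<in>Q. {x \<in> V. inc e x} = {p, q}) \<and>
     (\<forall>p\<in>P. \<forall>q\<in>Q. \<exists>!e. e \<in> Ed \<and> inc e p \<and> inc e q)"

text \<open>The multigraph is K_{m,n} where m, n are the cardinalities of the sets A, B.\<close>
definition is_K ::
  "'a set \<Rightarrow> 'b set \<Rightarrow> ('b \<Rightarrow> 'a \<Rightarrow> bool) \<Rightarrow> 'x set \<Rightarrow> 'y set \<Rightarrow> bool" where
  "is_K V Ed inc A B \<longleftrightarrow>
     (\<exists>P Q. complete_bipartite_on V Ed inc P Q \<and> P \<approx> A \<and> Q \<approx> B)"

end

theory Submission
  imports Defs "HOL-Algebra.Group_Action"
begin

text \<open>In a tree two non-backtracking walks with the same endpoints coincide. Hence, for a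
  permutation \<open>\<phi>\<close> of \<open>X \<union> Y\<close> preserving \<open>X\<close> and \<open>Y\<close>, following from \<open>v'\<close> the \<open>\<phi>\<close>-images of the
  colours of any walk starting at \<open>v\<close> defines an automorphism \<open>g\<close> with \<open>g v = v'\<close> whose local
  action is \<open>\<phi>\<close> everywhere, as soon as \<open>v\<close> and \<open>v'\<close> lie on the same side and the colours of
  their incoming arcs correspond under \<open>\<phi>\<close>. Taking \<open>\<phi>\<close> from \<open>M\<close> on \<open>X\<close> and from \<open>N\<close> on \<open>Y\<close>,
  the orbits of \<open>U_c(M, N)\<close> on \<open>V\<^sub>Y\<close> (resp. \<open>V\<^sub>X\<close>) correspond to the \<open>M\<close>-orbits on \<open>X\<close> (resp.
  \<open>N\<close>-orbits on \<open>Y\<close>) via the colour of incoming arcs, an edge orbit is determined by the orbits of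
  its endpoints, and any two vertex orbits on opposite sides are joined by an edge.\<close>

section \<open>Non-backtracking walks in forests\<close>

definition walk :: "('v \<Rightarrow> 'v \<Rightarrow> bool) \<Rightarrow> 'v list \<Rightarrow> bool" where
  "walk E xs \<longleftrightarrow> xs \<noteq> [] \<and> successively E xs"

fun non_backtracking :: "'v list \<Rightarrow> bool" where
  "non_backtracking (x # y # z # zs) \<longleftrightarrow> x \<noteq> z \<and> non_backtracking (y # z # zs)"
| "non_backtracking _ \<longleftrightarrow> True"

lemma non_backtracking_conv_nth:
  "non_backtracking xs \<longleftrightarrow> (\<forall>i. Suc (Suc i) < length xs \<longrightarrow> xs ! i \<noteq> xs ! Suc (Suc i))"
proof (induction xs rule: non_backtracking.induct)
  case (1 x y z zs)
  show ?case
    unfolding non_backtracking.simps 1 by (auto simp: nth_Cons split: nat.splits)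
qed simp_all

lemma non_backtracking_rev [simp]: "non_backtracking (rev xs) \<longleftrightarrow> non_backtracking xs"
proof -
  have "non_backtracking xs" if "non_backtracking (rev xs)" for xs :: "'a list"
    unfolding non_backtracking_conv_nth
  proof (intro allI impI)
    fix i assume i: "Suc (Suc i) < length xs"
    let ?j = "length xs - Suc (Suc (Suc i))"
    have "rev xs ! ?j \<noteq> rev xs ! Suc (Suc ?j)"
      using that i unfolding non_backtracking_conv_nth by auto
    then show "xs ! i \<noteq> xs ! Suc (Suc i)"
      using i by (simp add: rev_nth Suc_diff_Suc)
  qed
  from this[of xs] this[of "rev xs"] show ?thesis by auto
qed

lemma non_backtracking_appendD1: "non_backtracking (xs @ ys) \<Longrightarrow> non_backtracking xs"
  unfolding non_backtracking_conv_nth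
proof (intro allI impI)
  fix i assume "\<forall>i. Suc (Suc i) < length (xs @ ys) \<longrightarrow> (xs @ ys) ! i \<noteq> (xs @ ys) ! Suc (Suc i)"
    and i: "Suc (Suc i) < length xs"
  then have "(xs @ ys) ! i \<noteq> (xs @ ys) ! Suc (Suc i)" by simp
  then show "xs ! i \<noteq> xs ! Suc (Suc i)" using i by (simp add: nth_append)
qed

lemma non_backtracking_appendD2: "non_backtracking (xs @ ys) \<Longrightarrow> non_backtracking ys"
  using non_backtracking_appendD1[of "rev ys" "rev xs"] by (simp flip: rev_append)

lemma non_backtracking_append_overlap:
  "non_backtracking (xs @ y1 # y2 # ys) \<longleftrightarrow>
     non_backtracking (xs @ [y1, y2]) \<and> non_backtracking (y1 # y2 # ys)"
proof (induction xs rule: non_backtracking.induct)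
  case (1 x y z zs)
  then show ?case by auto
qed simp_all

lemma backtrack_decomp:
  "\<not> non_backtracking xs \<Longrightarrow> \<exists>p u w q. xs = p @ u # w # u # q"
proof (induction xs rule: non_backtracking.induct)
  case (1 x y z zs)
  show ?case
  proof (cases "x = z")
    case True then show ?thesis by (metis append_Nil)
  next
    case False
    then obtain p u w q where "y # z # zs = p @ u # w # u # q" using 1 by auto
    then have "x # y # z # zs = (x # p) @ u # w # u # q" by simp
    then show ?thesis by blast
  qed
qed auto

lemma walk_append:
  "walk E (xs @ ys) \<longleftrightarrow> (xs = [] \<and> walk E ys) \<or> (ys = [] \<and> walk E xs)
     \<or> (walk E xs \<and> walk E ys \<and> E (last xs) (hd ys))"
  unfolding walk_def successively_append_iff by auto

lemma walk_tl: "walk E (x # xs) \<Longrightarrow> xs \<noteq> [] \<Longrightarrow> walk E xs"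
  unfolding walk_def by (auto simp: successively_Cons)

lemma walk_remove_backtrack: "walk E (p @ u # w # u # q) \<Longrightarrow> walk E (p @ u # q)"
  unfolding walk_def successively_append_iff by auto

lemma walk_rev:
  assumes "\<And>u w. E u w \<Longrightarrow> E w u"
  shows "walk E (rev xs) \<longleftrightarrow> walk E xs"
proof -
  have "(\<lambda>x y. E y x) = E" using assms by blast
  then show ?thesis by (metis walk_def successively_rev rev_is_Nil_conv)
qed

lemma walk_last_mem:
  assumes "\<And>u w. E u w \<Longrightarrow> w \<in> V" and "walk E xs" and "hd xs \<in> V"
  shows "last xs \<in> V"
  using assms(2,3)
proof (induction xs rule: rev_induct)
  case (snoc x xs)
  show ?case
  proof (cases "xs = []")
    case False
    then have "E (last xs) x" using snoc.prems(1) by (simp add: walk_def successively_append_iff)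
    then show ?thesis by (simp add: assms(1))
  qed (use snoc.prems in simp)
qed (simp add: walk_def)

lemma rtranclp_imp_walk:
  assumes "E\<^sup>*\<^sup>* v w"
  shows "\<exists>xs. walk E xs \<and> hd xs = v \<and> last xs = w"
  using assms
proof (induction rule: rtranclp_induct)
  case base then show ?case by (intro exI[of _ "[v]"]) (simp add: walk_def)
next
  case (step b d)
  then obtain xs where "walk E xs" "hd xs = v" "last xs = b" by blast
  with step.hyps(2) show ?case
    by (intro exI[of _ "xs @ [d]"]) (auto simp: walk_def successively_append_iff)
qed

lemma closed_walk_butlast_is_cycle:
  assumes w: "walk E xs" and "distinct (butlast xs)" and l: "4 \<le> length xs"
    and closed: "hd xs = last xs"
  shows "is_cycle E (butlast xs)"
  unfolding is_cycle_def
proof (intro conjI allI impI)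
  let ?bl = "butlast xs"
  have sx: "E (xs ! i) (xs ! Suc i)" if "Suc i < length xs" for i
    using w that unfolding walk_def by (simp add: successively_nth)
  show "3 \<le> length ?bl" using l by simp
  show "distinct ?bl" by fact
  show "E (?bl ! i) (?bl ! Suc i)" if "Suc i < length ?bl" for i
    using sx that by (simp add: nth_butlast)
  have "?bl \<noteq> []" using l by (cases xs rule: rev_cases) auto
  then have "last ?bl = xs ! (length xs - 2)"
    using l by (simp add: last_conv_nth nth_butlast numeral_2_eq_2)
  moreover have "hd ?bl = last xs"
    using l closed by (cases xs) auto
  moreover have "last xs = xs ! Suc (length xs - 2)"
    using l by (cases xs rule: rev_cases) (auto simp: nth_append)
  ultimately show "E (last ?bl) (hd ?bl)" using sx[of "length xs - 2"] l by simp
qed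

lemma walk_infix: "walk E (xs @ ys @ zs) \<Longrightarrow> ys \<noteq> [] \<Longrightarrow> walk E ys"
  unfolding walk_def successively_append_iff by auto

lemma closed_walk_shortcut:
  assumes w: "walk E xs" and nb: "non_backtracking xs" and "\<not> distinct (butlast xs)"
  obtains ys where "walk E ys" "non_backtracking ys" "2 \<le> length ys" "length ys < length xs"
    "hd ys = last ys"
proof -
  obtain i j where ij: "i < j" "j < length (butlast xs)" "butlast xs ! i = butlast xs ! j"
    using assms(3) by (metis distinct_conv_nth linorder_neqE_nat)
  let ?ys = "drop i (take (Suc j) xs)"
  have dec: "xs = take i xs @ ?ys @ drop (Suc j) xs"
    using ij by (metis append.assoc append_take_drop_id less_imp_le_nat less_SucI take_take
        min_absorb1)
  have len: "length ?ys = Suc j - i" using ij by simp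
  show thesis
  proof
    show "walk E ?ys" using walk_infix[of E] w dec len ij
      by (metis Suc_diff_le less_imp_le_nat list.size(3) nat.distinct(1))
    show "non_backtracking ?ys"
      using nb dec by (metis non_backtracking_appendD1 non_backtracking_appendD2)
    show "hd ?ys = last ?ys" using ij by (simp add: hd_drop_conv_nth last_conv_nth nth_butlast)
    show "2 \<le> length ?ys" "length ?ys < length xs" using len ij by auto
  qed
qed

lemma no_closed_non_backtracking_walk:
  assumes irrefl: "\<And>u. \<not> E u u" and acyclic: "\<nexists>ys. is_cycle E ys"
  shows "walk E xs \<Longrightarrow> non_backtracking xs \<Longrightarrow> 2 \<le> length xs \<Longrightarrow> hd xs \<noteq> last xs"
proof (induction "length xs" arbitrary: xs rule: less_induct)
  case less
  show ?case
  proof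
    assume closed: "hd xs = last xs"
    consider "\<not> distinct (butlast xs)" | "length xs = 2" | "length xs = 3"
      | "distinct (butlast xs)" "4 \<le> length xs"
      using less.prems(3) by linarith
    then show False
    proof cases
      case 1
      then obtain ys where "walk E ys" "non_backtracking ys" "2 \<le> length ys"
          "length ys < length xs" "hd ys = last ys"
        using closed_walk_shortcut[OF less.prems(1,2)] by blast
      then show False using less.hyps by blast
    next
      case 2
      then obtain a b where "xs = [a, b]"
        by (metis One_nat_def Suc_1 length_0_conv length_Suc_conv)
      then show False using less.prems(1) closed irrefl unfolding walk_def by auto
    next
      case 3
      then obtain a b d where "xs = [a, b, d]"
        by (metis length_0_conv length_Suc_conv numeral_3_eq_3)
      then show False using less.prems(2) closed by auto
    next
      case 4
      then show False using closed_walk_butlast_is_cycle[OF less.prems(1) _ _ closed] acyclic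
        by blast
    qed
  qed
qed

lemma walk_rev_append:
  assumes sym: "\<And>u w. E u w \<Longrightarrow> E w u"
    and walks: "walk E (a # zs)" "walk E (a # xs)" and zs: "zs \<noteq> []"
  shows "walk E (rev zs @ a # xs)"
proof -
  have "walk E zs" using walk_tl[OF walks(1) zs] .
  then have "walk E (rev zs)" by (simp only: walk_rev[of E, OF sym])
  moreover have "E (hd zs) a" using walks(1) zs sym unfolding walk_def by (cases zs) auto
  ultimately show ?thesis using walks(2) zs unfolding walk_append by (simp add: last_rev)
qed

lemma non_backtracking_rev_append:
  assumes "non_backtracking (a # zs)" and "non_backtracking (a # x # xs)"
    and "zs \<noteq> []" and "hd zs \<noteq> x"
  shows "non_backtracking (rev zs @ a # x # xs)"
proof -
  have "non_backtracking (x # a # zs)" using assms(1,3,4) by (cases zs) auto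
  then have "non_backtracking (rev zs @ [a, x])" using non_backtracking_rev[of "x # a # zs"] by simp
  then show ?thesis using non_backtracking_append_overlap[of "rev zs" a x xs] assms(2) by simp
qed

lemma non_backtracking_walk_unique:
  assumes G: "simple_graph V E" and acyclic: "\<nexists>ys. is_cycle E ys"
  shows "walk E xs \<Longrightarrow> walk E zs \<Longrightarrow> non_backtracking xs \<Longrightarrow> non_backtracking zs
    \<Longrightarrow> hd xs = hd zs \<Longrightarrow> last xs = last zs \<Longrightarrow> xs = zs"
proof (induction xs arbitrary: zs)
  case Nil then show ?case by (simp add: walk_def)
next
  case (Cons a xs)
  have irrefl: "\<not> E u u" and sym: "E u w \<Longrightarrow> E w u" for u w
    using G unfolding simple_graph_def by auto
  note closed_walk = no_closed_non_backtracking_walk[of E, OF irrefl acyclic]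
  obtain zs' where zs: "zs = a # zs'"
    using Cons.prems(2,5) unfolding walk_def by (cases zs) auto
  consider "xs = []" | "zs' = []" | "xs \<noteq> []" "zs' \<noteq> []" "hd xs = hd zs'"
    | "xs \<noteq> []" "zs' \<noteq> []" "hd xs \<noteq> hd zs'"
    by blast
  then show ?case
  proof cases
    case 1
    then show ?thesis using closed_walk[of zs] Cons.prems zs by (cases zs') auto
  next
    case 2
    then show ?thesis using closed_walk[of "a # xs"] Cons.prems zs by (cases xs) auto
  next
    case 3
    then have "xs = zs'"
      using Cons.IH[of zs'] Cons.prems zs walk_tl[of E a xs] walk_tl[of E a zs']
        non_backtracking_appendD2[of "[a]"] by simp
    then show ?thesis using zs by simp
  next
    case 4
    \<comment> \<open>two distinct non-backtracking walks from \<open>a\<close> to the same vertex glue to a closed one\<close>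
    then obtain x xs' where xs: "xs = x # xs'" by (cases xs) auto
    let ?L = "rev zs' @ a # xs"
    have "walk E ?L" using walk_rev_append[OF sym] Cons.prems(1,2) zs 4 by simp
    moreover have "non_backtracking ?L"
      using non_backtracking_rev_append[of a zs' x xs'] Cons.prems(3,4) zs xs 4 by simp
    moreover have "hd ?L = last ?L" using Cons.prems(6) zs 4 by (simp add: hd_rev)
    moreover have "2 \<le> length ?L" using 4 by (cases xs) auto
    ultimately show ?thesis using closed_walk[of ?L] by blast
  qed
qed

section \<open>Orbits of permutation groups\<close>

lemma subgroup_group_action:
  assumes "subgroup H (BijGroup A)"
  shows "group_action ((BijGroup A)\<lparr>carrier := H\<rparr>) A id"
proof -
  have "group ((BijGroup A)\<lparr>carrier := H\<rparr>)"
    using subgroup.subgroup_is_group[OF assms group_BijGroup] .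
  moreover have "id \<in> hom ((BijGroup A)\<lparr>carrier := H\<rparr>) (BijGroup A)"
    using subgroup.subset[OF assms] by (auto simp: hom_def)
  ultimately show ?thesis
    unfolding group_action_def group_hom_def group_hom_axioms_def using group_BijGroup by blast
qed

lemma perm_orbit_self:
  assumes "subgroup H (BijGroup A)" and "x \<in> A"
  shows "x \<in> {g x | g. g \<in> H}"
  using group_action.orbit_refl[OF subgroup_group_action[OF assms(1)] assms(2)]
  by (simp add: orbit_def)

lemma perm_orbit_eq:
  assumes H: "subgroup H (BijGroup A)" and x: "x \<in> A" and y: "y \<in> {g x | g. g \<in> H}"
  shows "{g y | g. g \<in> H} = {g x | g. g \<in> H}"
proof -
  interpret group_action "(BijGroup A)\<lparr>carrier := H\<rparr>" A id
    using subgroup_group_action[OF H] .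
  let ?orb = "orbit ((BijGroup A)\<lparr>carrier := H\<rparr>) id"
  have orb: "?orb z = {g z | g. g \<in> H}" for z by (simp add: orbit_def)
  have y': "y \<in> ?orb x" using y orb by simp
  have yA: "y \<in> A" using y' x element_image unfolding orbit_def by auto
  have "?orb y = ?orb x"
  proof (intro equalityI subsetI)
    fix z assume z: "z \<in> ?orb y"
    then have "z \<in> A" using yA element_image unfolding orbit_def by auto
    with z show "z \<in> ?orb x" using orbit_trans[OF x yA _ y'] by blast
  next
    fix z assume z: "z \<in> ?orb x"
    then have "z \<in> A" using x element_image unfolding orbit_def by auto
    with z show "z \<in> ?orb y" using orbit_trans[OF yA x _ orbit_sym[OF x yA y']] by blast
  qed
  then show ?thesis using orb by simp
qed

lemma eqpoll_quotient_images:
  assumes h: "h ` A = B"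
    and same: "\<And>a a'. a \<in> A \<Longrightarrow> a' \<in> A \<Longrightarrow> F a = F a' \<longleftrightarrow> G (h a) = G (h a')"
  shows "F ` A \<approx> G ` B"
proof -
  let ?f = "\<lambda>S. G (h (SOME a. a \<in> A \<and> F a = S))"
  have f: "?f (F a) = G (h a)" if a: "a \<in> A" for a
  proof -
    have "(SOME a'. a' \<in> A \<and> F a' = F a) \<in> A \<and> F (SOME a'. a' \<in> A \<and> F a' = F a) = F a"
      by (rule someI_ex) (use a in blast)
    then show ?thesis using same a by blast
  qed
  have "inj_on ?f (F ` A)" using f same by (auto intro!: inj_onI)
  moreover have "?f ` F ` A = G ` B" using f h by (auto simp: image_comp)
  ultimately show ?thesis unfolding eqpoll_def bij_betw_def by blast
qed

section \<open>Colour-preserving automorphisms of a legally coloured biregular tree\<close>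

locale coloured_biregular_tree =
  fixes VT VX VY :: "'v set" and E :: "'v \<Rightarrow> 'v \<Rightarrow> bool" and X Y :: "'c set"
    and c :: "'v \<times> 'v \<Rightarrow> 'c"
  assumes tree: "biregular_tree VT E VX VY X Y"
    and colouring: "legal_colouring VT E VX VY X Y c"
    and disjoint: "X \<inter> Y = {}" and X_ne: "X \<noteq> {}" and Y_ne: "Y \<noteq> {}"
begin

lemma simple_graph: "simple_graph VT E"
  and acyclic: "\<nexists>xs. is_cycle E xs"
  and connected: "u \<in> VT \<Longrightarrow> w \<in> VT \<Longrightarrow> E\<^sup>*\<^sup>* u w"
  and VT_ne: "VT \<noteq> {}"
  using tree unfolding biregular_tree_def is_tree_def connected_graph_def by auto

lemma VX_Un_VY: "VX \<union> VY = VT" and VX_Int_VY: "VX \<inter> VY = {}"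
  and adj_sides: "E u w \<Longrightarrow> u \<in> VX \<longleftrightarrow> w \<in> VY"
  using tree unfolding biregular_tree_def by auto

lemma adj_VT: "E u w \<Longrightarrow> u \<in> VT" "E u w \<Longrightarrow> w \<in> VT"
  and adj_sym: "E u w \<Longrightarrow> E w u"
  using simple_graph unfolding simple_graph_def by auto

lemma VX_VT: "v \<in> VX \<Longrightarrow> v \<in> VT" and VY_VT: "v \<in> VY \<Longrightarrow> v \<in> VT"
  and VY_not_VX: "v \<in> VY \<Longrightarrow> v \<notin> VX" and VT_not_VX: "v \<in> VT \<Longrightarrow> v \<notin> VX \<Longrightarrow> v \<in> VY"
  using VX_Un_VY VX_Int_VY by auto

definition colours :: "'v \<Rightarrow> 'c set" where
  "colours v = (if v \<in> VX then X else Y)"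

lemma colour_bij: "v \<in> VT \<Longrightarrow> bij_betw c (arcs_from E v) (colours v)"
  using colouring VT_not_VX unfolding legal_colouring_def colours_def by auto

lemma colour_mem: "E v w \<Longrightarrow> c (v, w) \<in> colours v"
  using colour_bij[OF adj_VT(1)] unfolding bij_betw_def arcs_from_def by blast

lemma colour_inj: "E v w \<Longrightarrow> E v w' \<Longrightarrow> c (v, w) = c (v, w') \<Longrightarrow> w = w'"
  using colour_bij[OF adj_VT(1)] unfolding bij_betw_def inj_on_def arcs_from_def by blast

lemma colour_surj: "v \<in> VT \<Longrightarrow> k \<in> colours v \<Longrightarrow> \<exists>w. E v w \<and> c (v, w) = k"
proof -
  assume v: "v \<in> VT" and "k \<in> colours v"
  then have "k \<in> c ` arcs_from E v" using colour_bij[OF v] unfolding bij_betw_def by simp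
  then obtain a where "a \<in> arcs_from E v" "c a = k" by (rule imageE) simp
  then show ?thesis unfolding arcs_from_def by auto
qed

lemma in_neighbour_ex: "v \<in> VT \<Longrightarrow> \<exists>u. E u v"
proof -
  assume v: "v \<in> VT"
  obtain k where "k \<in> colours v" using X_ne Y_ne unfolding colours_def by (cases "v \<in> VX") auto
  then show ?thesis using colour_surj[OF v] adj_sym by blast
qed

definition in_colour :: "'v \<Rightarrow> 'c" where
  "in_colour v = c (SOME u. E u v, v)"

lemma in_colour_eq: "E u v \<Longrightarrow> in_colour v = c (u, v)"
proof -
  assume uv: "E u v"
  then have "E (SOME u. E u v) v" by (rule someI)
  with uv show ?thesis
    using colouring adj_VT(2) unfolding legal_colouring_def in_colour_def arcs_to_def by blast
qed

lemma in_colour_VY: "v \<in> VY \<Longrightarrow> in_colour v \<in> X"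
  and in_colour_VX: "v \<in> VX \<Longrightarrow> in_colour v \<in> Y"
proof -
  have side: "in_colour v \<in> (if v \<in> VX then Y else X)" if v: "v \<in> VT" for v
  proof -
    obtain u where uv: "E u v" using in_neighbour_ex[OF v] ..
    then have "u \<in> VX \<longleftrightarrow> v \<notin> VX"
      using adj_sides[OF uv] adj_VT[OF uv] VT_not_VX VY_not_VX by blast
    then show ?thesis using colour_mem[OF uv] in_colour_eq[OF uv] by (auto simp: colours_def)
  qed
  show "v \<in> VY \<Longrightarrow> in_colour v \<in> X" using side[OF VY_VT] VY_not_VX by force
  show "v \<in> VX \<Longrightarrow> in_colour v \<in> Y" using side[OF VX_VT] by force
qed

lemma VX_ne: "VX \<noteq> {}" and VY_ne: "VY \<noteq> {}"
proof -
  obtain v where v: "v \<in> VT" using VT_ne by blast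
  obtain u where "E u v" using in_neighbour_ex[OF v] ..
  then have "VX \<noteq> {} \<and> VY \<noteq> {}" using adj_sides adj_VT VT_not_VX by blast
  then show "VX \<noteq> {}" "VY \<noteq> {}" by simp_all
qed

lemma in_colour_image_VY: "in_colour ` VY = X"
proof (intro equalityI subsetI)
  fix x assume "x \<in> X"
  moreover obtain v where v: "v \<in> VX" using VX_ne by blast
  ultimately obtain w where vw: "E v w" "c (v, w) = x"
    using colour_surj[OF VX_VT[OF v]] by (auto simp: colours_def)
  have "w \<in> VY" using adj_sides vw(1) v by blast
  moreover have "x = in_colour w" using in_colour_eq[OF vw(1)] vw(2) by simp
  ultimately show "x \<in> in_colour ` VY" by (rule rev_image_eqI)
qed (use in_colour_VY in blast)

lemma in_colour_image_VX: "in_colour ` VX = Y"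
proof (intro equalityI subsetI)
  fix y assume "y \<in> Y"
  moreover obtain v where v: "v \<in> VY" using VY_ne by blast
  ultimately obtain w where vw: "E v w" "c (v, w) = y"
    using colour_surj[OF VY_VT[OF v]] VY_not_VX[OF v] by (auto simp: colours_def)
  then have "w \<in> VX" using adj_sides[OF vw(1)] VY_not_VX[OF v] adj_VT[OF vw(1)] VT_not_VX by blast
  moreover have "y = in_colour w" using in_colour_eq[OF vw(1)] vw(2) by simp
  ultimately show "y \<in> in_colour ` VX" by (rule rev_image_eqI)
qed (use in_colour_VX in blast)

definition neighbour :: "'v \<Rightarrow> 'c \<Rightarrow> 'v" where
  "neighbour v k = (THE w. E v w \<and> c (v, w) = k)"

lemma neighbour: "v \<in> VT \<Longrightarrow> k \<in> colours v \<Longrightarrow> E v (neighbour v k) \<and> c (v, neighbour v k) = k"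
  unfolding neighbour_def by (rule theI') (use colour_surj colour_inj in blast)

lemma neighbour_colour: "E v w \<Longrightarrow> neighbour v (c (v, w)) = w"
  unfolding neighbour_def by (rule the_equality) (use colour_inj in blast)+

definition side_preserving :: "('c \<Rightarrow> 'c) \<Rightarrow> bool" where
  "side_preserving \<phi> \<longleftrightarrow> (\<forall>x\<in>X. \<phi> x \<in> X) \<and> (\<forall>y\<in>Y. \<phi> y \<in> Y)"

text \<open>\<open>can_map \<phi> v v'\<close>: \<open>v'\<close> is a possible image of \<open>v\<close> under an automorphism \<open>g\<close> with
  \<open>c (g a, g b) = \<phi> (c (a, b))\<close> for all arcs.\<close>
definition can_map :: "('c \<Rightarrow> 'c) \<Rightarrow> 'v \<Rightarrow> 'v \<Rightarrow> bool" where
  "can_map \<phi> v v' \<longleftrightarrow>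
     v \<in> VT \<and> v' \<in> VT \<and> (v' \<in> VX \<longleftrightarrow> v \<in> VX) \<and> in_colour v' = \<phi> (in_colour v)"

lemma can_map_inverse:
  "\<forall>x\<in>X \<union> Y. \<psi> (\<phi> x) = x \<Longrightarrow> can_map \<phi> v v' \<Longrightarrow> can_map \<psi> v' v"
  using in_colour_VX in_colour_VY VT_not_VX unfolding can_map_def by auto

lemma can_map_step:
  assumes \<phi>: "side_preserving \<phi>" and ay: "can_map \<phi> a y" and ab: "E a b"
  defines "z \<equiv> neighbour y (\<phi> (c (a, b)))"
  shows "E y z" and "c (y, z) = \<phi> (c (a, b))" and "can_map \<phi> b z"
proof -
  have "\<phi> (c (a, b)) \<in> colours y"
    using colour_mem[OF ab] \<phi> ay unfolding side_preserving_def can_map_def colours_def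
    by (auto split: if_splits)
  then show yz: "E y z" and c: "c (y, z) = \<phi> (c (a, b))"
    using neighbour ay unfolding z_def can_map_def by auto
  have "z \<in> VX \<longleftrightarrow> b \<in> VX"
    using ay adj_sides[OF ab] adj_sides[OF yz] adj_VT[OF ab] adj_VT[OF yz] VT_not_VX VY_not_VX
    unfolding can_map_def by blast
  then show "can_map \<phi> b z"
    using in_colour_eq[OF yz] in_colour_eq[OF ab] c adj_VT[OF ab] adj_VT[OF yz]
    unfolding can_map_def by simp
qed

lemma can_map_step_back:
  assumes "side_preserving \<phi>" and ay: "can_map \<phi> a y" and ab: "E a b"
  shows "neighbour (neighbour y (\<phi> (c (a, b)))) (\<phi> (c (b, a))) = y"
proof -
  let ?z = "neighbour y (\<phi> (c (a, b)))"
  have yz: "E y ?z" using can_map_step[OF assms] by simp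
  have "\<phi> (c (b, a)) = in_colour y"
    using in_colour_eq[OF adj_sym[OF ab]] ay unfolding can_map_def by simp
  also have "\<dots> = c (?z, y)" using in_colour_eq[OF adj_sym[OF yz]] .
  finally show ?thesis using neighbour_colour[OF adj_sym[OF yz]] by simp
qed

fun transport :: "('c \<Rightarrow> 'c) \<Rightarrow> 'v \<Rightarrow> 'v list \<Rightarrow> 'v list" where
  "transport \<phi> y [] = []"
| "transport \<phi> y [x] = [y]"
| "transport \<phi> y (x1 # x2 # xs) = y # transport \<phi> (neighbour y (\<phi> (c (x1, x2)))) (x2 # xs)"

lemma length_transport [simp]: "length (transport \<phi> y xs) = length xs"
  by (induction \<phi> y xs rule: transport.induct) auto

lemma transport_eq_Nil_iff [simp]: "transport \<phi> y xs = [] \<longleftrightarrow> xs = []"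
  by (metis length_0_conv length_transport)

lemma transport_Cons:
  "xs \<noteq> [] \<Longrightarrow> transport \<phi> y (x # xs) = y # transport \<phi> (neighbour y (\<phi> (c (x, hd xs)))) xs"
  by (cases xs) auto

lemma hd_transport: "xs \<noteq> [] \<Longrightarrow> hd (transport \<phi> y xs) = y"
  by (cases xs; cases "tl xs") auto

lemma transport_snoc:
  "xs \<noteq> [] \<Longrightarrow> transport \<phi> y (xs @ [w]) =
     transport \<phi> y xs @ [neighbour (last (transport \<phi> y xs)) (\<phi> (c (last xs, w)))]"
  by (induction \<phi> y xs rule: transport.induct) auto

lemma walk_transport:
  "side_preserving \<phi> \<Longrightarrow> walk E xs \<Longrightarrow> can_map \<phi> (hd xs) y \<Longrightarrow>
    walk E (transport \<phi> y xs) \<and> can_map \<phi> (last xs) (last (transport \<phi> y xs))"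
proof (induction \<phi> y xs rule: transport.induct)
  case (3 \<phi> y x1 x2 xs)
  let ?z = "neighbour y (\<phi> (c (x1, x2)))"
  have e: "E x1 x2" using "3.prems"(2) unfolding walk_def by simp
  note step = can_map_step[OF "3.prems"(1) _ e, of y]
  have ih: "walk E (transport \<phi> ?z (x2 # xs)) \<and>
      can_map \<phi> (last (x2 # xs)) (last (transport \<phi> ?z (x2 # xs)))"
    using "3.IH"[OF "3.prems"(1) walk_tl[OF "3.prems"(2)]] step "3.prems"(3) by simp
  then have "walk E (y # transport \<phi> ?z (x2 # xs))"
    using step "3.prems"(3) hd_transport[of "x2 # xs"]
    unfolding walk_def by (simp add: successively_Cons)
  then show ?case using ih by simp
qed (simp_all add: walk_def)

lemma last_transport_backtrack:
  assumes \<phi>: "side_preserving \<phi>"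
  shows "walk E (p @ u # w # u # q) \<Longrightarrow> can_map \<phi> (hd (p @ u # w # u # q)) y \<Longrightarrow>
    last (transport \<phi> y (p @ u # w # u # q)) = last (transport \<phi> y (p @ u # q))"
proof (induction p arbitrary: y)
  case Nil
  have "E u w" using Nil.prems(1) unfolding walk_def by simp
  then have "neighbour (neighbour y (\<phi> (c (u, w)))) (\<phi> (c (w, u))) = y"
    using can_map_step_back[OF \<phi>] Nil.prems(2) by simp
  then show ?case by (cases q) simp_all
next
  case (Cons a p)
  let ?L = "p @ u # w # u # q" and ?L' = "p @ u # q"
  have hd_eq: "hd ?L = hd ?L'" by (cases p) auto
  let ?z = "neighbour y (\<phi> (c (a, hd ?L)))"
  have "E a (hd ?L)" using Cons.prems(1) unfolding walk_def by (simp add: successively_Cons)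
  then have "can_map \<phi> (hd ?L) ?z" using can_map_step[OF \<phi>] Cons.prems(2) by simp
  then have "last (transport \<phi> ?z ?L) = last (transport \<phi> ?z ?L')"
    using Cons.IH walk_tl[of E a ?L] Cons.prems(1) by simp
  then show ?case using transport_Cons[of ?L \<phi> y a] transport_Cons[of ?L' \<phi> y a] hd_eq by simp
qed

lemma last_transport_reduced:
  assumes \<phi>: "side_preserving \<phi>"
  shows "walk E xs \<Longrightarrow> can_map \<phi> (hd xs) y \<Longrightarrow>
    \<exists>rs. walk E rs \<and> non_backtracking rs \<and> hd rs = hd xs \<and> last rs = last xs
      \<and> last (transport \<phi> y rs) = last (transport \<phi> y xs)"
proof (induction "length xs" arbitrary: xs rule: less_induct)
  case less
  show ?case
  proof (cases "non_backtracking xs")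
    case False
    then obtain p u w q where xs: "xs = p @ u # w # u # q" using backtrack_decomp by blast
    let ?xs' = "p @ u # q"
    have "walk E ?xs'" using walk_remove_backtrack less.prems(1) xs by simp
    moreover have "hd ?xs' = hd xs" using xs by (cases p) auto
    moreover have "last ?xs' = last xs" using xs by (cases q) auto
    moreover have "last (transport \<phi> y xs) = last (transport \<phi> y ?xs')"
      using last_transport_backtrack[OF \<phi>] less.prems xs by simp
    ultimately show ?thesis using less.hyps[of ?xs'] less.prems(2) xs by fastforce
  qed (use less.prems in blast)
qed

lemma last_transport_eq:
  assumes \<phi>: "side_preserving \<phi>" and walks: "walk E xs" "walk E zs"
    and ends: "hd xs = hd zs" "last xs = last zs" and y: "can_map \<phi> (hd xs) y"
  shows "last (transport \<phi> y xs) = last (transport \<phi> y zs)"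
proof -
  obtain rs where rs: "walk E rs" "non_backtracking rs" "hd rs = hd xs" "last rs = last xs"
      "last (transport \<phi> y rs) = last (transport \<phi> y xs)"
    using last_transport_reduced[OF \<phi> walks(1) y] by blast
  obtain rs' where rs': "walk E rs'" "non_backtracking rs'" "hd rs' = hd zs" "last rs' = last zs"
      "last (transport \<phi> y rs') = last (transport \<phi> y zs)"
    using last_transport_reduced[OF \<phi> walks(2)] y ends by auto
  have "rs = rs'"
    using non_backtracking_walk_unique[OF simple_graph acyclic rs(1) rs'(1) rs(2) rs'(2)] rs rs' ends
    by simp
  then show ?thesis using rs rs' by simp
qed

lemma transport_transport:
  assumes \<phi>: "side_preserving \<phi>" and inv: "\<forall>x\<in>X \<union> Y. \<psi> (\<phi> x) = x"
  shows "walk E xs \<Longrightarrow> can_map \<phi> (hd xs) y \<Longrightarrow> transport \<psi> (hd xs) (transport \<phi> y xs) = xs"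
proof (induction xs arbitrary: y rule: induct_list012)
  case (3 x1 x2 xs)
  let ?z = "neighbour y (\<phi> (c (x1, x2)))"
  let ?L = "transport \<phi> ?z (x2 # xs)"
  have e: "E x1 x2" using "3.prems"(1) unfolding walk_def by simp
  note step = can_map_step[OF \<phi> _ e, of y]
  have "\<psi> (c (y, ?z)) = c (x1, x2)"
    using step "3.prems"(2) inv colour_mem[OF e] unfolding colours_def by (auto split: if_splits)
  then have "transport \<psi> x1 (y # ?L) = x1 # transport \<psi> x2 ?L"
    using transport_Cons[of ?L \<psi> x1 y] hd_transport[of "x2 # xs"] neighbour_colour[OF e] by simp
  moreover have "transport \<psi> x2 ?L = x2 # xs"
    using "3.IH"(2)[of ?z] walk_tl[OF "3.prems"(1)] step "3.prems"(2) by simp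
  ultimately show ?case by simp
qed simp_all

text \<open>Well defined: by \<open>last_transport_eq\<close> the endpoint does not depend on the walk.\<close>
definition colour_extension :: "('c \<Rightarrow> 'c) \<Rightarrow> 'v \<Rightarrow> 'v \<Rightarrow> 'v \<Rightarrow> 'v" where
  "colour_extension \<phi> v v' w =
     (if w \<in> VT then last (transport \<phi> v' (SOME xs. walk E xs \<and> hd xs = v \<and> last xs = w))
      else undefined)"

lemma colour_extension_walk:
  assumes \<phi>: "side_preserving \<phi>" and vv': "can_map \<phi> v v'" and xs: "walk E xs" "hd xs = v"
  shows "colour_extension \<phi> v v' (last xs) = last (transport \<phi> v' xs)"
proof -
  have "last xs \<in> VT" using walk_last_mem[OF _ xs(1)] adj_VT vv' xs(2) unfolding can_map_def by blast
  moreover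
  let ?ys = "SOME ys. walk E ys \<and> hd ys = v \<and> last ys = last xs"
  have "walk E ?ys \<and> hd ?ys = v \<and> last ?ys = last xs"
    by (rule someI[of _ xs]) (use xs in simp)
  then have "last (transport \<phi> v' ?ys) = last (transport \<phi> v' xs)"
    using last_transport_eq[OF \<phi>, of ?ys xs v'] xs vv' by simp
  ultimately show ?thesis unfolding colour_extension_def by simp
qed

lemma exists_walk_from:
  assumes "v \<in> VT" "w \<in> VT" obtains xs where "walk E xs" "hd xs = v" "last xs = w"
  using rtranclp_imp_walk[OF connected[OF assms]] by blast

lemma colour_extension_base:
  "side_preserving \<phi> \<Longrightarrow> can_map \<phi> v v' \<Longrightarrow> colour_extension \<phi> v v' v = v'"
  using colour_extension_walk[of \<phi> v v' "[v]"] by (simp add: walk_def)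

lemma can_map_colour_extension:
  assumes \<phi>: "side_preserving \<phi>" and vv': "can_map \<phi> v v'" and w: "w \<in> VT"
  shows "can_map \<phi> w (colour_extension \<phi> v v' w)"
proof -
  obtain xs where xs: "walk E xs" "hd xs = v" "last xs = w"
    using exists_walk_from vv' w unfolding can_map_def by blast
  show ?thesis
    using colour_extension_walk[OF \<phi> vv' xs(1,2)] walk_transport[OF \<phi> xs(1)] vv' xs by simp
qed

lemma colour_extension_arc:
  assumes \<phi>: "side_preserving \<phi>" and vv': "can_map \<phi> v v'" and uw: "E u w"
  shows "E (colour_extension \<phi> v v' u) (colour_extension \<phi> v v' w)"
    and "c (colour_extension \<phi> v v' u, colour_extension \<phi> v v' w) = \<phi> (c (u, w))"
proof -
  let ?g = "colour_extension \<phi> v v'"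
  obtain xs where xs: "walk E xs" "hd xs = v" "last xs = u"
    using exists_walk_from vv' adj_VT[OF uw] unfolding can_map_def by blast
  then have ne: "xs \<noteq> []" unfolding walk_def by simp
  have "walk E (xs @ [w])" using xs uw unfolding walk_append by (simp add: walk_def)
  then have "?g w = last (transport \<phi> v' (xs @ [w]))"
    using colour_extension_walk[OF \<phi> vv', of "xs @ [w]"] xs(2) ne by simp
  also have "\<dots> = neighbour (?g u) (\<phi> (c (u, w)))"
    using transport_snoc[OF ne] colour_extension_walk[OF \<phi> vv' xs(1,2)] xs(3) by simp
  finally have gw: "?g w = neighbour (?g u) (\<phi> (c (u, w)))" .
  have "can_map \<phi> u (?g u)" using can_map_colour_extension[OF \<phi> vv' adj_VT(1)[OF uw]] .
  then show "E (?g u) (?g w)" "c (?g u, ?g w) = \<phi> (c (u, w))"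
    using can_map_step[OF \<phi> _ uw] gw by simp_all
qed

lemma colour_extension_inverse:
  assumes \<phi>: "side_preserving \<phi>" and \<psi>: "side_preserving \<psi>" and inv: "\<forall>x\<in>X \<union> Y. \<psi> (\<phi> x) = x"
    and vv': "can_map \<phi> v v'" and w: "w \<in> VT"
  shows "colour_extension \<psi> v' v (colour_extension \<phi> v v' w) = w"
proof -
  obtain xs where xs: "walk E xs" "hd xs = v" "last xs = w"
    using exists_walk_from vv' w unfolding can_map_def by blast
  let ?ys = "transport \<phi> v' xs"
  have "walk E ?ys" using walk_transport[OF \<phi> xs(1)] vv' xs(2) by simp
  moreover have "hd ?ys = v'" using hd_transport xs(1) unfolding walk_def by simp
  ultimately have "colour_extension \<psi> v' v (last ?ys) = last (transport \<psi> v ?ys)"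
    using colour_extension_walk[OF \<psi> can_map_inverse[OF inv vv']] by blast
  also have "transport \<psi> v ?ys = xs" using transport_transport[OF \<phi> inv xs(1)] vv' xs(2) by simp
  finally show ?thesis using colour_extension_walk[OF \<phi> vv' xs(1,2)] xs(3) by simp
qed

theorem exists_colour_automorphism:
  assumes \<phi>: "side_preserving \<phi>" and \<psi>: "side_preserving \<psi>"
    and inv: "\<forall>x\<in>X \<union> Y. \<psi> (\<phi> x) = x" "\<forall>x\<in>X \<union> Y. \<phi> (\<psi> x) = x"
    and vv': "can_map \<phi> v v'"
  obtains g where "g \<in> tree_aut VT E" "g ` VX = VX" "g v = v'"
    "\<And>a b. E a b \<Longrightarrow> c (g a, g b) = \<phi> (c (a, b))"
proof
  let ?g = "colour_extension \<phi> v v'" and ?h = "colour_extension \<psi> v' v"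
  have v'v: "can_map \<psi> v' v" using can_map_inverse[OF inv(1) vv'] .
  have hg: "\<And>w. w \<in> VT \<Longrightarrow> ?h (?g w) = w" using colour_extension_inverse[OF \<phi> \<psi> inv(1) vv'] .
  have gh: "\<And>w. w \<in> VT \<Longrightarrow> ?g (?h w) = w" using colour_extension_inverse[OF \<psi> \<phi> inv(2) v'v] .
  have g_side: "w \<in> VT \<Longrightarrow> ?g w \<in> VT \<and> (?g w \<in> VX \<longleftrightarrow> w \<in> VX)" for w
    using can_map_colour_extension[OF \<phi> vv'] unfolding can_map_def by blast
  have h_side: "w \<in> VT \<Longrightarrow> ?h w \<in> VT \<and> (?h w \<in> VX \<longleftrightarrow> w \<in> VX)" for w
    using can_map_colour_extension[OF \<psi> v'v] unfolding can_map_def by blast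
  have "bij_betw ?g VT VT"
    by (rule bij_betw_byWitness[where f' = ?h]) (use hg gh g_side h_side in auto)
  moreover have "?g \<in> extensional VT" unfolding extensional_def colour_extension_def by simp
  moreover have "E u w \<longleftrightarrow> E (?g u) (?g w)" if "u \<in> VT" "w \<in> VT" for u w
    using colour_extension_arc(1)[OF \<phi> vv', of u w] colour_extension_arc(1)[OF \<psi> v'v, of "?g u" "?g w"]
      hg that by auto
  ultimately show "?g \<in> tree_aut VT E" unfolding tree_aut_def Bij_def by simp
  show "?g ` VX = VX"
  proof (intro equalityI subsetI)
    fix w assume "w \<in> VX"
    then show "w \<in> ?g ` VX" using gh[of w] h_side[of w] VX_VT by (metis image_eqI)
  qed (use g_side VX_VT in auto)
  show "?g v = v'" using colour_extension_base[OF \<phi> vv'] .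
  show "\<And>a b. E a b \<Longrightarrow> c (?g a, ?g b) = \<phi> (c (a, b))"
    using colour_extension_arc(2)[OF \<phi> vv'] .
qed

end

section \<open>The orbits of \<open>U_c(M, N)\<close>\<close>

locale coloured_tree_groups = coloured_biregular_tree VT VX VY E X Y c
  for VT VX VY :: "'v set" and E :: "'v \<Rightarrow> 'v \<Rightarrow> bool" and X Y :: "'c set"
    and c :: "'v \<times> 'v \<Rightarrow> 'c" +
  fixes M N :: "('c \<Rightarrow> 'c) set"
  assumes M: "subgroup M (BijGroup X)" and N: "subgroup N (BijGroup Y)"
begin

abbreviation U :: "('v \<Rightarrow> 'v) set" where
  "U \<equiv> U_c VT E VX VY X Y c M N"

lemma local_action_colour:
  "E u w \<Longrightarrow> local_action E c g u (colours u) (c (u, w)) = c (g u, g w)"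
proof -
  assume uw: "E u w"
  have "inj_on c (arcs_from E u)" using colour_bij[OF adj_VT(1)[OF uw]] unfolding bij_betw_def ..
  moreover have "(u, w) \<in> arcs_from E u" using uw by (simp add: arcs_from_def)
  ultimately have "the_inv_into (arcs_from E u) c (c (u, w)) = (u, w)" by (rule the_inv_into_f_f)
  then show ?thesis unfolding local_action_def using colour_mem[OF uw] by simp
qed

lemma local_action_eq_restrict:
  assumes "\<And>a b. E a b \<Longrightarrow> c (g a, g b) = \<phi> (c (a, b))" and u: "u \<in> VT"
  shows "local_action E c g u (colours u) = restrict \<phi> (colours u)"
proof
  fix x
  show "local_action E c g u (colours u) x = restrict \<phi> (colours u) x"
  proof (cases "x \<in> colours u")
    case True
    then obtain w where "E u w" "c (u, w) = x" using colour_surj[OF u] by blast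
    then show ?thesis using local_action_colour assms(1) True by auto
  qed (simp add: local_action_def)
qed

definition join_perm :: "('c \<Rightarrow> 'c) \<Rightarrow> ('c \<Rightarrow> 'c) \<Rightarrow> 'c \<Rightarrow> 'c" where
  "join_perm \<sigma> \<tau> x = (if x \<in> X then \<sigma> x else if x \<in> Y then \<tau> x else x)"

lemma join_perm_X [simp]: "x \<in> X \<Longrightarrow> join_perm \<sigma> \<tau> x = \<sigma> x"
  and join_perm_Y [simp]: "x \<in> Y \<Longrightarrow> join_perm \<sigma> \<tau> x = \<tau> x"
  using disjoint by (auto simp: join_perm_def)

lemma join_perm_bij:
  assumes \<sigma>: "bij_betw \<sigma> X X" and \<tau>: "bij_betw \<tau> Y Y"
  defines "\<phi> \<equiv> join_perm \<sigma> \<tau>" and "\<psi> \<equiv> join_perm (inv_into X \<sigma>) (inv_into Y \<tau>)"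
  shows "side_preserving \<phi>" "side_preserving \<psi>"
    "\<forall>x\<in>X \<union> Y. \<psi> (\<phi> x) = x" "\<forall>x\<in>X \<union> Y. \<phi> (\<psi> x) = x"
  using bij_betwE[OF \<sigma>] bij_betwE[OF \<tau>] bij_betwE[OF bij_betw_inv_into[OF \<sigma>]]
    bij_betwE[OF bij_betw_inv_into[OF \<tau>]] bij_betw_inv_into_left[OF \<sigma>] bij_betw_inv_into_left[OF \<tau>]
    bij_betw_inv_into_right[OF \<sigma>] bij_betw_inv_into_right[OF \<tau>]
  unfolding side_preserving_def \<phi>_def \<psi>_def by auto

lemma exists_U_c_element:
  assumes \<sigma>: "\<sigma> \<in> M" and \<tau>: "\<tau> \<in> N" and vv': "can_map (join_perm \<sigma> \<tau>) v v'"
  obtains g where "g \<in> U" "g v = v'" "\<And>a b. E a b \<Longrightarrow> c (g a, g b) = join_perm \<sigma> \<tau> (c (a, b))"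
proof -
  have "\<sigma> \<in> Bij X" "\<tau> \<in> Bij Y"
    using \<sigma> \<tau> subgroup.subset[OF M] subgroup.subset[OF N] by (auto simp: BijGroup_def)
  then have \<sigma>B: "bij_betw \<sigma> X X" "\<sigma> \<in> extensional X" and \<tau>B: "bij_betw \<tau> Y Y" "\<tau> \<in> extensional Y"
    unfolding Bij_def by auto
  obtain g where g: "g \<in> tree_aut VT E" "g ` VX = VX" "g v = v'"
      and arcs: "\<And>a b. E a b \<Longrightarrow> c (g a, g b) = join_perm \<sigma> \<tau> (c (a, b))"
    using exists_colour_automorphism[OF join_perm_bij[OF \<sigma>B(1) \<tau>B(1)] vv'] by blast
  have "restrict (join_perm \<sigma> \<tau>) X = \<sigma>" "restrict (join_perm \<sigma> \<tau>) Y = \<tau>"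
    using \<sigma>B(2) \<tau>B(2) by (auto simp: extensional_def)
  then have "local_action E c g u X \<in> M" if "u \<in> VX" for u
    using local_action_eq_restrict[of g "join_perm \<sigma> \<tau>", OF arcs VX_VT[OF that]] \<sigma> that by (simp add: colours_def)
  moreover have "local_action E c g u Y \<in> N" if "u \<in> VY" for u
    using local_action_eq_restrict[of g "join_perm \<sigma> \<tau>", OF arcs VY_VT[OF that]] \<tau> that VY_not_VX
    by (simp add: colours_def \<open>restrict (join_perm \<sigma> \<tau>) Y = \<tau>\<close>)
  ultimately have "g \<in> U" using g(1,2) unfolding U_c_def by simp
  then show thesis using g(3) arcs by (rule that)
qed

lemma U_c_sides:
  assumes g: "g \<in> U" and z: "z \<in> VT"
  shows "g z \<in> VT" and "g z \<in> VX \<longleftrightarrow> z \<in> VX"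
proof -
  have gB: "bij_betw g VT VT" "g ` VX = VX" using g unfolding U_c_def tree_aut_def Bij_def by auto
  show "g z \<in> VT" using gB(1) z bij_betwE by blast
  show "g z \<in> VX \<longleftrightarrow> z \<in> VX"
  proof
    assume "g z \<in> VX"
    then obtain x where "x \<in> VX" "g z = g x" using gB(2) by blast
    then show "z \<in> VX" using gB(1) z VX_VT unfolding bij_betw_def inj_on_def by metis
  qed (use gB(2) in blast)
qed

lemma U_c_arc:
  assumes "g \<in> U" and uw: "E u w"
  shows "E (g u) (g w)"
proof -
  have "\<forall>u\<in>VT. \<forall>w\<in>VT. E u w \<longleftrightarrow> E (g u) (g w)" using assms(1) unfolding U_c_def tree_aut_def by simp
  then show ?thesis using adj_VT[OF uw] uw by simp
qed

definition M_orbit :: "'c \<Rightarrow> 'c set" where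
  "M_orbit x = {\<sigma> x | \<sigma>. \<sigma> \<in> M}"

definition N_orbit :: "'c \<Rightarrow> 'c set" where
  "N_orbit y = {\<tau> y | \<tau>. \<tau> \<in> N}"

text \<open>Vertices of \<open>VX\<close> are entered by arcs coloured in \<open>Y\<close>, on which \<open>N\<close> acts, and
  vice versa.\<close>
definition orbit_type :: "'v \<Rightarrow> bool \<times> 'c set" where
  "orbit_type z = (if z \<in> VX then (True, N_orbit (in_colour z)) else (False, M_orbit (in_colour z)))"

lemma in_colour_U_c:
  assumes g: "g \<in> U" and z: "z \<in> VT"
  shows "z \<in> VY \<Longrightarrow> in_colour (g z) \<in> M_orbit (in_colour z)"
    and "z \<in> VX \<Longrightarrow> in_colour (g z) \<in> N_orbit (in_colour z)"
proof -
  obtain u where uz: "E u z" using in_neighbour_ex[OF z] ..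
  have gu: "in_colour (g z) = local_action E c g u (colours u) (in_colour z)"
    using in_colour_eq[OF U_c_arc[OF g uz]] local_action_colour[OF uz] in_colour_eq[OF uz] by simp
  have u_side: "u \<in> VX \<longleftrightarrow> z \<notin> VX"
    using adj_sides[OF uz] adj_VT[OF uz] VT_not_VX VY_not_VX by blast
  show "in_colour (g z) \<in> M_orbit (in_colour z)" if "z \<in> VY"
    using g gu u_side VY_not_VX[OF that] unfolding U_c_def M_orbit_def colours_def by auto
  show "in_colour (g z) \<in> N_orbit (in_colour z)" if "z \<in> VX"
    using g gu u_side that VT_not_VX[OF adj_VT(1)[OF uz]]
    unfolding U_c_def N_orbit_def colours_def by auto
qed

lemma orbit_type_U_c: "g \<in> U \<Longrightarrow> z \<in> VT \<Longrightarrow> orbit_type (g z) = orbit_type z"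
  using in_colour_U_c U_c_sides perm_orbit_eq[OF M in_colour_VY] perm_orbit_eq[OF N in_colour_VX]
    VT_not_VX unfolding orbit_type_def M_orbit_def N_orbit_def by auto

lemma same_orbit_type_VX:
  assumes "z \<in> VX" "z' \<in> VT" "orbit_type z' = orbit_type z"
  shows "z' \<in> VX" and "\<exists>\<tau>\<in>N. in_colour z' = \<tau> (in_colour z)"
proof -
  show z': "z' \<in> VX" using assms unfolding orbit_type_def by (auto split: if_splits)
  then show "\<exists>\<tau>\<in>N. in_colour z' = \<tau> (in_colour z)"
    using assms perm_orbit_self[OF N in_colour_VX[OF z']] unfolding orbit_type_def N_orbit_def
    by auto
qed

lemma same_orbit_type_VY:
  assumes "z \<in> VY" "z' \<in> VT" "orbit_type z' = orbit_type z"
  shows "z' \<in> VY" and "\<exists>\<sigma>\<in>M. in_colour z' = \<sigma> (in_colour z)"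
proof -
  show z': "z' \<in> VY"
    using assms VT_not_VX VY_not_VX unfolding orbit_type_def by (auto split: if_splits)
  then show "\<exists>\<sigma>\<in>M. in_colour z' = \<sigma> (in_colour z)"
    using assms perm_orbit_self[OF M in_colour_VY[OF z']] VY_not_VX unfolding orbit_type_def M_orbit_def
    by auto
qed

lemma id_in_M: "(\<lambda>x\<in>X. x) \<in> M" and id_in_N: "(\<lambda>y\<in>Y. y) \<in> N"
  using subgroup.one_closed[OF M] subgroup.one_closed[OF N] by (simp_all add: BijGroup_def)

definition vertex_orbit :: "'v \<Rightarrow> 'v set" where
  "vertex_orbit z = {z' \<in> VT. orbit_type z' = orbit_type z}"

lemma U_c_orbit: "z \<in> VT \<Longrightarrow> {g z | g. g \<in> U} = vertex_orbit z"
proof (intro equalityI subsetI)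
  fix x assume "z \<in> VT" "x \<in> {g z | g. g \<in> U}"
  then show "x \<in> vertex_orbit z" using U_c_sides orbit_type_U_c unfolding vertex_orbit_def by auto
next
  fix z' assume z: "z \<in> VT" and "z' \<in> vertex_orbit z"
  then have z': "z' \<in> VT" "orbit_type z' = orbit_type z" unfolding vertex_orbit_def by auto
  show "z' \<in> {g z | g. g \<in> U}"
  proof (cases "z \<in> VX")
    case True
    then obtain \<tau> where "\<tau> \<in> N" "in_colour z' = \<tau> (in_colour z)" "z' \<in> VX"
      using same_orbit_type_VX[OF _ z'] by blast
    moreover have "can_map (join_perm (\<lambda>x\<in>X. x) \<tau>) z z'"
      using calculation z z' True in_colour_VX unfolding can_map_def by simp
    ultimately obtain g where "g \<in> U" "g z = z'" using exists_U_c_element[OF id_in_M] by blast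
    then show ?thesis by blast
  next
    case False
    then have zY: "z \<in> VY" using VT_not_VX z by blast
    then obtain \<sigma> where "\<sigma> \<in> M" "in_colour z' = \<sigma> (in_colour z)" "z' \<in> VY"
      using same_orbit_type_VY[OF _ z'] by blast
    moreover have "can_map (join_perm \<sigma> (\<lambda>y\<in>Y. y)) z z'"
      using calculation z z' False VY_not_VX in_colour_VY[OF zY] unfolding can_map_def by simp
    ultimately obtain g where "g \<in> U" "g z = z'" using exists_U_c_element[OF _ id_in_N] by blast
    then show ?thesis by blast
  qed
qed

section \<open>The quotient graph\<close>

lemma quot_vertices_U_c: "quot_vertices U VT = vertex_orbit ` VT"
  unfolding quot_vertices_def perm_orbits_def using U_c_orbit by simp

lemma vertex_orbit_eq_iff:
  assumes "z \<in> VT"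
  shows "vertex_orbit z = vertex_orbit z' \<longleftrightarrow> orbit_type z = orbit_type z'"
proof
  assume "vertex_orbit z = vertex_orbit z'"
  moreover have "z \<in> vertex_orbit z" using assms unfolding vertex_orbit_def by simp
  ultimately show "orbit_type z = orbit_type z'" unfolding vertex_orbit_def by auto
qed (simp add: vertex_orbit_def)

definition edge_orbit :: "'v \<Rightarrow> 'v \<Rightarrow> 'v set set" where
  "edge_orbit u w = {{u', w'} | u' w'. u' \<in> VX \<and> w' \<in> VY \<and> E u' w'
     \<and> orbit_type u' = orbit_type u \<and> orbit_type w' = orbit_type w}"

lemma U_c_edge_orbit:
  assumes u: "u \<in> VX" and w: "w \<in> VY" and uw: "E u w"
  shows "{g ` {u, w} | g. g \<in> U} = edge_orbit u w"
proof (intro equalityI subsetI)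
  fix x assume "x \<in> {g ` {u, w} | g. g \<in> U}"
  then obtain g where g: "g \<in> U" "x = g ` {u, w}" by blast
  have "g u \<in> VX" "g w \<in> VY"
    using U_c_sides[OF g(1) VX_VT[OF u]] U_c_sides[OF g(1) VY_VT[OF w]] u w VY_not_VX VT_not_VX
    by auto
  then show "x \<in> edge_orbit u w"
    using U_c_arc[OF g(1) uw] orbit_type_U_c[OF g(1)] VX_VT[OF u] VY_VT[OF w] g(2)
    unfolding edge_orbit_def by auto
next
  fix x assume "x \<in> edge_orbit u w"
  then obtain u' w' where x: "x = {u', w'}" "u' \<in> VX" "w' \<in> VY" "E u' w'"
      and types: "orbit_type u' = orbit_type u" "orbit_type w' = orbit_type w"
    unfolding edge_orbit_def by blast
  obtain \<tau> where \<tau>: "\<tau> \<in> N" "in_colour u' = \<tau> (in_colour u)"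
    using same_orbit_type_VX[OF u VX_VT[OF x(2)] types(1)] by blast
  obtain \<sigma> where \<sigma>: "\<sigma> \<in> M" "in_colour w' = \<sigma> (in_colour w)"
    using same_orbit_type_VY[OF w VY_VT[OF x(3)] types(2)] by blast
  have "can_map (join_perm \<sigma> \<tau>) u u'"
    using u x(2) \<tau>(2) in_colour_VX[OF u] VX_VT unfolding can_map_def by simp
  then obtain g where g: "g \<in> U" "g u = u'"
      and arcs: "\<And>a b. E a b \<Longrightarrow> c (g a, g b) = join_perm \<sigma> \<tau> (c (a, b))"
    using exists_U_c_element[OF \<sigma>(1) \<tau>(1)] by blast
  \<comment> \<open>\<open>g w\<close> and \<open>w'\<close> are neighbours of \<open>u'\<close> with the same colour\<close>
  have "c (u', g w) = \<sigma> (in_colour w)"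
    using arcs[OF uw] g(2) in_colour_eq[OF uw] in_colour_VY[OF w] by simp
  also have "\<dots> = c (u', w')" using \<sigma>(2) in_colour_eq[OF x(4)] by simp
  finally have "g w = w'" using colour_inj U_c_arc[OF g(1) uw] g(2) x(4) by blast
  then show "x \<in> {g ` {u, w} | g. g \<in> U}" using x(1) g by blast
qed

lemma quot_edges_U_c:
  "quot_edges U VT E = {edge_orbit u w | u w. u \<in> VX \<and> w \<in> VY \<and> E u w}"
proof (intro equalityI subsetI)
  fix x assume "x \<in> quot_edges U VT E"
  then obtain a b where ab: "E a b" "x = {g ` {a, b} | g. g \<in> U}"
    unfolding quot_edges_def tree_edges_def by blast
  consider "a \<in> VX" "b \<in> VY" | "b \<in> VX" "a \<in> VY"
    using adj_sides[OF ab(1)] adj_VT[OF ab(1)] VT_not_VX by blast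
  then show "x \<in> {edge_orbit u w | u w. u \<in> VX \<and> w \<in> VY \<and> E u w}"
  proof cases
    case 1
    then show ?thesis using U_c_edge_orbit[OF 1 ab(1)] ab by blast
  next
    case 2
    then show ?thesis
      using U_c_edge_orbit[OF 2 adj_sym[OF ab(1)]] ab adj_sym[OF ab(1)] by (auto simp: insert_commute)
  qed
next
  fix x assume "x \<in> {edge_orbit u w | u w. u \<in> VX \<and> w \<in> VY \<and> E u w}"
  then obtain u w where uw: "u \<in> VX" "w \<in> VY" "E u w" "x = edge_orbit u w" by blast
  have "{u, w} \<in> tree_edges VT E" unfolding tree_edges_def using uw VX_VT VY_VT by blast
  moreover have "x = {g ` {u, w} | g. g \<in> U}" using U_c_edge_orbit[OF uw(1-3)] uw(4) by simp
  ultimately show "x \<in> quot_edges U VT E" unfolding quot_edges_def by (rule rev_image_eqI)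
qed

lemma quot_incident_edge_orbit:
  assumes u: "u \<in> VX" and w: "w \<in> VY" and uw: "E u w" and z: "z \<in> VT"
  shows "quot_incident (edge_orbit u w) (vertex_orbit z) \<longleftrightarrow>
    orbit_type z = orbit_type u \<or> orbit_type z = orbit_type w"
proof
  assume "quot_incident (edge_orbit u w) (vertex_orbit z)"
  then obtain u' w' y where "orbit_type u' = orbit_type u" "orbit_type w' = orbit_type w"
      "y \<in> {u', w'}" "y \<in> vertex_orbit z"
    unfolding quot_incident_def edge_orbit_def by blast
  then show "orbit_type z = orbit_type u \<or> orbit_type z = orbit_type w"
    unfolding vertex_orbit_def by auto
next
  assume "orbit_type z = orbit_type u \<or> orbit_type z = orbit_type w"
  then have "{u, w} \<inter> vertex_orbit z \<noteq> {}"
    using VX_VT[OF u] VY_VT[OF w] unfolding vertex_orbit_def by auto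
  moreover have "{u, w} \<in> edge_orbit u w" using u w uw unfolding edge_orbit_def by blast
  ultimately show "quot_incident (edge_orbit u w) (vertex_orbit z)"
    unfolding quot_incident_def by (rule bexI)
qed

lemma orbit_type_VX_VY: "u \<in> VX \<Longrightarrow> w \<in> VY \<Longrightarrow> orbit_type u \<noteq> orbit_type w"
  using VY_not_VX unfolding orbit_type_def by auto

lemma edge_orbit_ends:
  assumes u: "u \<in> VX" and w: "w \<in> VY" and uw: "E u w"
  shows "{x \<in> vertex_orbit ` VT. quot_incident (edge_orbit u w) x} = {vertex_orbit w, vertex_orbit u}"
proof (intro equalityI subsetI)
  fix x assume "x \<in> {x \<in> vertex_orbit ` VT. quot_incident (edge_orbit u w) x}"
  then obtain z where "z \<in> VT" "x = vertex_orbit z" "quot_incident (edge_orbit u w) (vertex_orbit z)"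
    by blast
  then show "x \<in> {vertex_orbit w, vertex_orbit u}"
    using quot_incident_edge_orbit[OF u w uw] vertex_orbit_eq_iff by auto
qed (use quot_incident_edge_orbit[OF u w uw] VX_VT[OF u] VY_VT[OF w] in auto)

lemma unique_edge_orbit:
  assumes u0: "u0 \<in> VX" and w0: "w0 \<in> VY"
  shows "\<exists>!e. e \<in> {edge_orbit u w | u w. u \<in> VX \<and> w \<in> VY \<and> E u w}
    \<and> quot_incident e (vertex_orbit w0) \<and> quot_incident e (vertex_orbit u0)"
proof -
  obtain w where u0w: "E u0 w" "c (u0, w) = in_colour w0"
    using colour_surj[OF VX_VT[OF u0]] in_colour_VY[OF w0] u0 by (auto simp: colours_def)
  have w: "w \<in> VY" using adj_sides u0w(1) u0 by blast
  have "orbit_type w = orbit_type w0"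
    using in_colour_eq[OF u0w(1)] u0w(2) w w0 VY_not_VX unfolding orbit_type_def by simp
  then have incident: "quot_incident (edge_orbit u0 w) (vertex_orbit w0)"
      "quot_incident (edge_orbit u0 w) (vertex_orbit u0)"
    using quot_incident_edge_orbit[OF u0 w u0w(1)] VX_VT[OF u0] VY_VT[OF w0] by auto
  show ?thesis
  proof (rule ex1I[of _ "edge_orbit u0 w"])
    show "edge_orbit u0 w \<in> {edge_orbit u w | u w. u \<in> VX \<and> w \<in> VY \<and> E u w}
      \<and> quot_incident (edge_orbit u0 w) (vertex_orbit w0)
      \<and> quot_incident (edge_orbit u0 w) (vertex_orbit u0)"
      using u0 w u0w(1) incident by blast
  next
    fix e assume e: "e \<in> {edge_orbit u w | u w. u \<in> VX \<and> w \<in> VY \<and> E u w}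
      \<and> quot_incident e (vertex_orbit w0) \<and> quot_incident e (vertex_orbit u0)"
    then obtain u' w' where u'w': "u' \<in> VX" "w' \<in> VY" "E u' w'" "e = edge_orbit u' w'" by blast
    have "orbit_type w0 = orbit_type w'" "orbit_type u0 = orbit_type u'"
      using e u'w' quot_incident_edge_orbit[OF u'w'(1-3)] VX_VT[OF u0] VY_VT[OF w0]
        orbit_type_VX_VY[OF u0 u'w'(2)] orbit_type_VX_VY[OF u'w'(1) w0]
      by auto
    then show "e = edge_orbit u0 w"
      using u'w'(4) \<open>orbit_type w = orbit_type w0\<close> unfolding edge_orbit_def by simp
  qed
qed

lemma quotient_complete_bipartite:
  "complete_bipartite_on (quot_vertices U VT) (quot_edges U VT E) quot_incident
     (vertex_orbit ` VY) (vertex_orbit ` VX)"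
  unfolding complete_bipartite_on_def quot_vertices_U_c quot_edges_U_c
proof (intro conjI ballI)
  show "vertex_orbit ` VY \<union> vertex_orbit ` VX = vertex_orbit ` VT" using VX_Un_VY by blast
  show "vertex_orbit ` VY \<inter> vertex_orbit ` VX = {}"
    using vertex_orbit_eq_iff[OF VY_VT] orbit_type_VX_VY by fastforce
next
  fix eo assume "eo \<in> {edge_orbit u w | u w. u \<in> VX \<and> w \<in> VY \<and> E u w}"
  then obtain u w where uw: "u \<in> VX" "w \<in> VY" "E u w" "eo = edge_orbit u w" by blast
  show "\<exists>p\<in>vertex_orbit ` VY. \<exists>q\<in>vertex_orbit ` VX.
      {x \<in> vertex_orbit ` VT. quot_incident eo x} = {p, q}"
  proof (intro bexI)
    show "{x \<in> vertex_orbit ` VT. quot_incident eo x} = {vertex_orbit w, vertex_orbit u}"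
      using edge_orbit_ends[OF uw(1-3)] uw(4) by simp
  qed (use uw in simp_all)
next
  fix p q assume "p \<in> vertex_orbit ` VY" "q \<in> vertex_orbit ` VX"
  then obtain w0 u0 where "w0 \<in> VY" "p = vertex_orbit w0" "u0 \<in> VX" "q = vertex_orbit u0" by blast
  then show "\<exists>!e. e \<in> {edge_orbit u w | u w. u \<in> VX \<and> w \<in> VY \<and> E u w}
      \<and> quot_incident e p \<and> quot_incident e q"
    using unique_edge_orbit by simp
qed

lemma vertex_orbits_VY_eqpoll: "vertex_orbit ` VY \<approx> perm_orbits M X"
proof -
  have "perm_orbits M X = M_orbit ` X" unfolding perm_orbits_def M_orbit_def by simp
  moreover have "vertex_orbit ` VY \<approx> M_orbit ` X"
    using VY_not_VX by (intro eqpoll_quotient_images[OF in_colour_image_VY])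
      (simp add: vertex_orbit_eq_iff VY_VT orbit_type_def)
  ultimately show ?thesis by simp
qed

lemma vertex_orbits_VX_eqpoll: "vertex_orbit ` VX \<approx> perm_orbits N Y"
proof -
  have "perm_orbits N Y = N_orbit ` Y" unfolding perm_orbits_def N_orbit_def by simp
  moreover have "vertex_orbit ` VX \<approx> N_orbit ` Y"
    by (intro eqpoll_quotient_images[OF in_colour_image_VX])
      (simp add: vertex_orbit_eq_iff VX_VT orbit_type_def)
  ultimately show ?thesis by simp
qed

theorem quotient_is_K:
  "is_K (quot_vertices U VT) (quot_edges U VT E) quot_incident (perm_orbits M X) (perm_orbits N Y)"
  unfolding is_K_def
  using quotient_complete_bipartite vertex_orbits_VY_eqpoll vertex_orbits_VX_eqpoll by blast

end

theorem lemma4p4: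
  fixes X Y :: "'c set"
    and M N :: "('c \<Rightarrow> 'c) set"
    and VT VX VY :: "'v set"
    and E :: "'v \<Rightarrow> 'v \<Rightarrow> bool"
    and c :: "'v \<times> 'v \<Rightarrow> 'c"
  assumes "X \<inter> Y = {}"
    and "\<exists>x\<in>X. \<exists>x'\<in>X. x \<noteq> x'"
    and "\<exists>y\<in>Y. \<exists>y'\<in>Y. y \<noteq> y'"
    and "subgroup M (BijGroup X)" and "M \<noteq> {\<one>\<^bsub>BijGroup X\<^esub>}"
    and "subgroup N (BijGroup Y)" and "N \<noteq> {\<one>\<^bsub>BijGroup Y\<^esub>}"
    and "biregular_tree VT E VX VY X Y"
    and "legal_colouring VT E VX VY X Y c"
  shows "is_K (quot_vertices (U_c VT E VX VY X Y c M N) VT)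
              (quot_edges (U_c VT E VX VY X Y c M N) VT E)
              quot_incident
              (perm_orbits M X) (perm_orbits N Y)"
  \<comment> \<open>only \<open>X \<noteq> {}\<close> and \<open>Y \<noteq> {}\<close> are used: neither \<open>|X|, |Y| \<ge> 2\<close> nor the
    nontriviality of \<open>M\<close> and \<open>N\<close> plays a role\<close>
proof -
  have "X \<noteq> {}" "Y \<noteq> {}" using assms(2,3) by blast+
  then interpret coloured_tree_groups VT VX VY E X Y c M N
    using assms(1,4,6,8,9)
    by (intro coloured_tree_groups.intro coloured_biregular_tree.intro
        coloured_tree_groups_axioms.intro)
  show ?thesis by (rule quotient_is_K)
qed

end
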